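(* Let $P$ be a finite poset with height function $h$. Then $\mathsf{Z}_{P,h}([1]_q)=\chi_P$, where $\chi_P=\sum_{k\ge1}(-1)^{k-1}\#\operatorname{Ch}_k(P)$ is the Euler characteristic of the order complex of $P$. In particular, if $P$ has a unique minimum or a unique maximum, then $\mathsf{Z}_{P,h}([1]_q)=1$.
   Context: $q$ is an indeterminate; $[n]_q=(q^n-1)/(q-1)$ (so $[1]_q=1$). A height function is $h:P\to\mathbb{N}$ with $h(x)<h(y)$ whenever $y$ covers $x$. $\operatorname{Ch}_k(P)$ is the set of strict chains $c_1<\cdots<c_k$ in $P$. For a tuple $a=(a_1,\dots,a_k)$ of distinct nonnegative integers, $\mathsf{E}_a\in\mathbb{Q}(q)[x]$ is the unique polynomial with $\mathsf{E}_a([n]_q)=\sum_{m\in\mathbb{N}^k,\sum m_i=n}q^{\sum a_im_i}$ for all $n\ge0$. The $q$-Zeta polynomial is $\mathsf{Z}_{P,h}(x)=\sum_{k\ge1}\sum_{c\in\operatorname{Ch}_k(P)}q^{\sum_i h(c_i)}\mathsf{E}_{(h(c_1),\dots,h(c_k))}((x-[k+1]_q)/q^{k+1})$; it is the unique polynomial with $\mathsf{Z}_{P,h}([n]_q)=\sum_{e_1\le\cdots\le e_{n-1}}q^{\sum_j h(e_j)}$ for all $n\ge2$. *)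

theory Defs
  imports "HOL-Computational_Algebra.Polynomial" "HOL-Computational_Algebra.Fraction_Field"
begin

type_synonym qrat = "rat poly fract"

definition qvar :: qrat where
  "qvar = Fract [:0, 1:] 1"

definition qint :: "nat \<Rightarrow> qrat" where
  "qint n = (qvar ^ n - 1) / (qvar - 1)"

definition Epoly :: "nat list \<Rightarrow> qrat poly" where
  "Epoly a = (THE p. \<forall>n::nat. poly p (qint n) =
      (\<Sum>m\<in>{m::nat list. length m = length a \<and> sum_list m = n}.
          qvar ^ (\<Sum>i<length a. a ! i * m ! i)))"

definition chains :: "'a::order set \<Rightarrow> nat \<Rightarrow> 'a list set" where
  "chains P k = {c. length c = k \<and> set c \<subseteq> P \<and> sorted_wrt (<) c}"

definition covers_in :: "'a::order set \<Rightarrow> 'a \<Rightarrow> 'a \<Rightarrow> bool" where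
  "covers_in P x y \<longleftrightarrow> x \<in> P \<and> y \<in> P \<and> x < y \<and> \<not> (\<exists>z\<in>P. x < z \<and> z < y)"

definition height_fn :: "'a::order set \<Rightarrow> ('a \<Rightarrow> nat) \<Rightarrow> bool" where
  "height_fn P h \<longleftrightarrow> (\<forall>x y. covers_in P x y \<longrightarrow> h x < h y)"

text \<open>q-Zeta polynomial. Chains of length k > card P do not exist, so the sum
  over k \<ge> 1 is the finite sum over k = 1..card P.\<close>
definition qzeta :: "'a::order set \<Rightarrow> ('a \<Rightarrow> nat) \<Rightarrow> qrat poly" where
  "qzeta P h = (\<Sum>k\<in>{1..card P}. \<Sum>c\<in>chains P k.
      smult (qvar ^ sum_list (map h c))
        (pcompose (Epoly (map h c))
           [: - qint (k + 1) / qvar ^ (k + 1), 1 / qvar ^ (k + 1) :]))"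

definition euler_char :: "'a::order set \<Rightarrow> int" where
  "euler_char P = (\<Sum>k\<in>{1..card P}. (-1) ^ (k - 1) * int (card (chains P k)))"

end

theory Submission
  imports Defs
begin

text \<open>Counting compositions of n weighted by q^(a.m) satisfies the recursion of divided
  differences, so E_a is built from E_(a1 R) and E_(a2 R) by the substitution x \<mapsto> 1 + q x
  and division by q^a1 - q^a2. Since 1 + q [-(k+1)]_q = [-k]_q, the same recursion evaluated at
  the negative q-integer [-k]_q, k the length of a, gives the reciprocity
  E_a([-k]_q) = (-1)^(k-1) q^(-a1-...-ak). The substitution (x - [k+1]_q)/q^(k+1) sends [1]_q to
  [-k]_q, so every chain of length k contributes (-1)^(k-1) to Z_(P,h)([1]_q); the tuples h(c) are
  distinct because h is strictly increasing along chains.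
  If m is comparable to every element of P, inserting m is a bijection from the chains of
  length k avoiding m onto the chains of length k+1 through m, and the alternating chain count
  telescopes to the single empty chain.\<close>

lemma qvar_power: "qvar ^ n = Fract ([:0, 1:] ^ n) 1"
  by (induction n) (simp_all add: qvar_def One_fract_def)

lemma qvar_power_eq_iff: "qvar ^ a = qvar ^ b \<longleftrightarrow> a = b"
proof
  assume "qvar ^ a = qvar ^ b"
  then have "([:0, 1:] ^ a :: rat poly) = [:0, 1:] ^ b"
    by (simp add: qvar_power eq_fract)
  then have "degree ([:0, 1:] ^ a :: rat poly) = degree ([:0, 1:] ^ b :: rat poly)"
    by simp
  then show "a = b"
    by (simp add: degree_power_eq)
qed simp

lemma qvar_nonzero: "qvar \<noteq> 0"
  using qvar_power_eq_iff[of 1 0] by (auto simp: qvar_def Zero_fract_def eq_fract)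

lemma qvar_minus_one_nonzero: "qvar - 1 \<noteq> 0"
  using qvar_power_eq_iff[of 1 0] by simp

lemma qint_Suc: "qint (Suc n) = 1 + qvar * qint n"
  using qvar_minus_one_nonzero by (simp add: qint_def field_simps)

lemma qint_1: "qint 1 = 1"
  using qvar_minus_one_nonzero by (simp add: qint_def)

lemma inj_qint: "inj qint"
  using qvar_minus_one_nonzero by (auto simp: inj_def qint_def qvar_power_eq_iff)

lemma qvar_power_eq_qint: "qvar ^ n = 1 + qint n * (qvar - 1)"
  using qvar_minus_one_nonzero by (simp add: qint_def)

text \<open>The q-integer [-k]_q = (q^(-k) - 1)/(q - 1).\<close>
definition qint_neg :: "nat \<Rightarrow> qrat" where
  "qint_neg k = - qint k / qvar ^ k"

lemma qint_neg_Suc: "1 + qint_neg (Suc k) * qvar = qint_neg k"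
  using qvar_nonzero qvar_minus_one_nonzero by (simp add: qint_neg_def qint_def field_simps)

lemma qvar_inverse_eq_qint_neg_1: "1 / qvar = 1 + qint_neg 1 * (qvar - 1)"
  using qvar_nonzero qvar_minus_one_nonzero by (simp add: qint_neg_def qint_def field_simps)

lemma qint_neg_eq: "(1 - qint (Suc k)) / qvar ^ Suc k = qint_neg k"
  using qvar_nonzero by (simp add: qint_Suc qint_neg_def field_simps)

subsection \<open>Weighted compositions\<close>

fun comp_sum :: "'a::comm_semiring_1 \<Rightarrow> nat list \<Rightarrow> nat \<Rightarrow> 'a" where
  "comp_sum q [] n = (if n = 0 then 1 else 0)"
| "comp_sum q (a # as) n = (\<Sum>j\<le>n. q ^ (a * j) * comp_sum q as (n - j))"

lemma finite_lists_length_sum_list_eq: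
  "finite {m::nat list. length m = k \<and> sum_list m = n}"
proof (rule finite_subset)
  show "{m::nat list. length m = k \<and> sum_list m = n}
      \<subseteq> {m. set m \<subseteq> {0..n} \<and> length m = k}"
    using member_le_sum_list by fastforce
  show "finite {m. set m \<subseteq> {0..n} \<and> length m = k}"
    by (rule finite_lists_length_eq) simp
qed

lemma sum_compositions_eq_comp_sum:
  "(\<Sum>m\<in>{m::nat list. length m = length a \<and> sum_list m = n}.
      q ^ (\<Sum>i<length a. a ! i * m ! i)) = comp_sum q a n"
proof (induction a arbitrary: n)
  case Nil
  have "{m::nat list. length m = 0 \<and> sum_list m = n} = (if n = 0 then {[]} else {})"
    by auto
  then show ?case by simp
next
  case (Cons a as)
  let ?S = "\<lambda>n. {m::nat list. length m = length as \<and> sum_list m = n}"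
  have split: "{m::nat list. length m = length (a # as) \<and> sum_list m = n}
      = (\<lambda>(j, m). j # m) ` (SIGMA j:{..n}. ?S (n - j))"
  proof (rule set_eqI, rule iffI)
    fix m assume "m \<in> {m::nat list. length m = length (a # as) \<and> sum_list m = n}"
    then obtain j m' where "m = j # m'" "length m' = length as" "j + sum_list m' = n"
      by (cases m) auto
    then show "m \<in> (\<lambda>(j, m). j # m) ` (SIGMA j:{..n}. ?S (n - j))"
      by (auto intro!: image_eqI[where x = "(j, m')"])
  qed auto
  have inj: "inj_on (\<lambda>(j, m). j # m) (SIGMA j:{..n}. ?S (n - j))"
    by (auto simp: inj_on_def)
  have "(\<Sum>m\<in>{m::nat list. length m = length (a # as) \<and> sum_list m = n}.
          q ^ (\<Sum>i<length (a # as). (a # as) ! i * m ! i))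
      = (\<Sum>(j, m)\<in>(SIGMA j:{..n}. ?S (n - j)).
          q ^ (\<Sum>i<length (a # as). (a # as) ! i * (j # m) ! i))"
    unfolding split by (subst sum.reindex[OF inj]) (simp add: case_prod_beta)
  also have "\<dots> = (\<Sum>(j, m)\<in>(SIGMA j:{..n}. ?S (n - j)).
      q ^ (a * j) * q ^ (\<Sum>i<length as. as ! i * m ! i))"
    by (rule sum.cong)
      (auto simp del: sum.lessThan_Suc simp add: sum.lessThan_Suc_shift power_add)
  also have "\<dots> = (\<Sum>j\<le>n. \<Sum>m\<in>?S (n - j).
      q ^ (a * j) * q ^ (\<Sum>i<length as. as ! i * m ! i))"
    by (rule sum.Sigma[symmetric]) (auto simp: finite_lists_length_sum_list_eq)
  also have "\<dots> = comp_sum q (a # as) n"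
    by (simp add: sum_distrib_left[symmetric] Cons.IH)
  finally show ?case .
qed

lemma comp_sum_Cons_Suc:
  "comp_sum q (a # as) (Suc n) = comp_sum q as (Suc n) + q ^ a * comp_sum q (a # as) n"
proof -
  have "comp_sum q (a # as) (Suc n)
      = comp_sum q as (Suc n) + (\<Sum>j\<le>n. q ^ (a * Suc j) * comp_sum q as (Suc n - Suc j))"
    by (simp only: comp_sum.simps sum.atMost_Suc_shift) simp
  also have "\<dots> = comp_sum q as (Suc n) + q ^ a * comp_sum q (a # as) n"
    by (simp add: sum_distrib_left power_add mult.assoc)
  finally show ?thesis .
qed

lemma comp_sum_divided_difference:
  fixes q :: "'a::comm_ring_1"
  shows "(q ^ a1 - q ^ a2) * comp_sum q (a1 # a2 # as) n
    = comp_sum q (a1 # as) (Suc n) - comp_sum q (a2 # as) (Suc n)"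
proof (induction n)
  case 0
  show ?case by (simp add: comp_sum_Cons_Suc algebra_simps)
next
  case (Suc n)
  have "(q ^ a1 - q ^ a2) * comp_sum q (a1 # a2 # as) (Suc n)
      = (q ^ a1 - q ^ a2) * comp_sum q (a2 # as) (Suc n)
        + q ^ a1 * ((q ^ a1 - q ^ a2) * comp_sum q (a1 # a2 # as) n)"
    by (simp only: comp_sum_Cons_Suc) (simp add: algebra_simps)
  also have "\<dots> = comp_sum q (a1 # as) (Suc (Suc n)) - comp_sum q (a2 # as) (Suc (Suc n))"
    by (simp only: Suc.IH comp_sum_Cons_Suc[of q _ _ "Suc n"]) (simp add: algebra_simps)
  finally show ?case .
qed

subsection \<open>The polynomials E_a\<close>

text \<open>E_[] is not a polynomial, so the clause for [] is a placeholder.\<close>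
fun Epoly_dd :: "nat list \<Rightarrow> qrat poly" where
  "Epoly_dd [] = 0"
| "Epoly_dd [a] = [:1, qvar - 1:] ^ a"
| "Epoly_dd (a1 # a2 # as) = smult (1 / (qvar ^ a1 - qvar ^ a2))
    (pcompose (Epoly_dd (a1 # as) - Epoly_dd (a2 # as)) [:1, qvar:])"

lemma poly_Epoly_dd_qint:
  "distinct a \<Longrightarrow> a \<noteq> [] \<Longrightarrow> poly (Epoly_dd a) (qint n) = comp_sum qvar a n"
proof (induction a arbitrary: n rule: Epoly_dd.induct)
  case 1
  then show ?case by simp
next
  case (2 a)
  have "comp_sum qvar [a] n = (\<Sum>j\<le>n. qvar ^ (a * j) * (if n - j = 0 then 1 else 0))"
    by simp
  also have "\<dots> = (\<Sum>j\<in>{n}. qvar ^ (a * j))"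
    by (rule sum.mono_neutral_cong_right) auto
  finally show ?case
    by (simp add: poly_power qvar_power_eq_qint[symmetric]) (metis power_mult mult.commute)
next
  case (3 a1 a2 as)
  have "poly (Epoly_dd (a1 # a2 # as)) (qint n)
      = (comp_sum qvar (a1 # as) (Suc n) - comp_sum qvar (a2 # as) (Suc n))
        / (qvar ^ a1 - qvar ^ a2)"
    using "3.IH"[of "Suc n"] "3.prems" by (simp add: poly_pcompose qint_Suc mult.commute)
  also have "\<dots> = comp_sum qvar (a1 # a2 # as) n"
    using "3.prems"(1) comp_sum_divided_difference[of qvar a1 a2 as n]
    by (simp add: qvar_power_eq_iff field_simps del: comp_sum.simps)
  finally show ?case .
qed

lemma poly_eqI_on_qint:
  assumes "\<And>n. poly p (qint n) = poly r (qint n)"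
  shows "p = r"
proof (rule ccontr)
  assume "p \<noteq> r"
  then have "finite {x. poly (p - r) x = 0}"
    by (intro poly_roots_finite) simp
  moreover have "range qint \<subseteq> {x. poly (p - r) x = 0}"
    using assms by auto
  ultimately have "finite (range qint)"
    by (rule finite_subset[rotated])
  then show False
    using inj_qint range_inj_infinite by blast
qed

lemma Epoly_eq_Epoly_dd: "distinct a \<Longrightarrow> a \<noteq> [] \<Longrightarrow> Epoly a = Epoly_dd a"
  unfolding Epoly_def sum_compositions_eq_comp_sum
  by (rule the_equality) (auto intro: poly_eqI_on_qint simp: poly_Epoly_dd_qint)

lemma poly_Epoly_dd_qint_neg:
  "distinct a \<Longrightarrow> length a = Suc k \<Longrightarrow>
    poly (Epoly_dd a) (qint_neg (Suc k)) = (-1) ^ k / qvar ^ sum_list a"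
proof (induction a arbitrary: k rule: Epoly_dd.induct)
  case 1
  then show ?case by simp
next
  case (2 a)
  then show ?case
    using qvar_inverse_eq_qint_neg_1[symmetric] by (simp add: poly_power power_one_over)
next
  case (3 a1 a2 as)
  then obtain k' where k: "k = Suc k'"
    by auto
  have "poly (Epoly_dd (a1 # as)) (qint_neg (Suc k')) = (-1) ^ k' / qvar ^ sum_list (a1 # as)"
    and "poly (Epoly_dd (a2 # as)) (qint_neg (Suc k')) = (-1) ^ k' / qvar ^ sum_list (a2 # as)"
    using "3.IH" "3.prems" k by auto
  then have "poly (Epoly_dd (a1 # a2 # as)) (qint_neg (Suc k))
      = ((-1) ^ k' / qvar ^ sum_list (a1 # as) - (-1) ^ k' / qvar ^ sum_list (a2 # as))
        / (qvar ^ a1 - qvar ^ a2)"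
    using k by (simp add: poly_pcompose qint_neg_Suc)
  also have "\<dots> = (-1) ^ k / qvar ^ sum_list (a1 # a2 # as)"
    using "3.prems"(1) qvar_nonzero k by (simp add: qvar_power_eq_iff power_add field_simps)
  finally show ?case .
qed

lemma poly_Epoly_qint_neg:
  "distinct a \<Longrightarrow> length a = Suc k \<Longrightarrow>
    poly (Epoly a) (qint_neg (Suc k)) = (-1) ^ k / qvar ^ sum_list a"
  by (metis Epoly_eq_Epoly_dd list.size(3) nat.distinct(1) poly_Epoly_dd_qint_neg)

subsection \<open>Height functions along chains\<close>

lemma height_fn_less:
  assumes "finite P" and "height_fn P h" and "x \<in> P" and "y \<in> P" and "x < y"
  shows "h x < h y"
  using assms(3-5)
proof (induction "card {z\<in>P. x < z \<and> z < y}" arbitrary: x y rule: less_induct)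
  case less
  show ?case
  proof (cases "\<exists>z\<in>P. x < z \<and> z < y")
    case False
    then have "covers_in P x y"
      using less.prems by (simp add: covers_in_def)
    then show ?thesis
      using assms(2) by (simp add: height_fn_def)
  next
    case True
    then obtain z where z: "z \<in> P" "x < z" "z < y"
      by blast
    have fin: "finite {z\<in>P. x < z \<and> z < y}"
      using assms(1) by simp
    have "{w\<in>P. x < w \<and> w < z} \<subset> {z\<in>P. x < z \<and> z < y}"
      "{w\<in>P. z < w \<and> w < y} \<subset> {z\<in>P. x < z \<and> z < y}"
      using z less_trans by auto
    then have "h x < h z" "h z < h y"
      using less.hyps[OF psubset_card_mono[OF fin]] z less.prems by auto
    then show ?thesis
      by simp
  qed
qed

lemma distinct_map_height_chain:
  assumes "finite P" and "height_fn P h" and "c \<in> chains P k"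
  shows "distinct (map h c)"
proof -
  have "sorted_wrt (<) c" and "set c \<subseteq> P"
    using assms(3) by (auto simp: chains_def)
  then have "sorted_wrt (\<lambda>x y. h x < h y) c"
    by (auto intro: sorted_wrt_mono_rel[rotated] height_fn_less[OF assms(1,2)])
  then have "sorted_wrt (<) (map h c)"
    by (simp add: sorted_wrt_map)
  then show ?thesis
    by (simp add: strict_sorted_iff)
qed

subsection \<open>The value at [1]_q\<close>

lemma poly_qzeta_summand_qint_1:
  assumes "finite P" and "height_fn P h" and "c \<in> chains P (Suc k)"
  shows "poly (smult (qvar ^ sum_list (map h c))
      (pcompose (Epoly (map h c))
        [: - qint (Suc k + 1) / qvar ^ (Suc k + 1), 1 / qvar ^ (Suc k + 1) :])) (qint 1)
    = (-1) ^ k"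
proof -
  have "length (map h c) = Suc k"
    using assms(3) by (simp add: chains_def)
  moreover have "poly [: - qint (Suc k + 1) / qvar ^ (Suc k + 1), 1 / qvar ^ (Suc k + 1) :] (qint 1)
      = qint_neg (Suc k)"
    unfolding qint_1 using qint_neg_eq[of "Suc k"] by (simp add: diff_divide_distrib)
  ultimately show ?thesis
    using poly_Epoly_qint_neg distinct_map_height_chain[OF assms] qvar_nonzero
    by (simp add: poly_pcompose)
qed

lemma poly_qzeta_qint_1:
  assumes "finite P" and "height_fn P h"
  shows "poly (qzeta P h) (qint 1) = of_int (euler_char P)"
proof -
  have "poly (qzeta P h) (qint 1) = (\<Sum>k\<in>{1..card P}. \<Sum>c\<in>chains P k. (-1) ^ (k - 1) :: qrat)"
    unfolding qzeta_def poly_sum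
  proof (intro sum.cong refl)
    fix k c assume "k \<in> {1..card P}" and "c \<in> chains P k"
    then show "poly (smult (qvar ^ sum_list (map h c)) (pcompose (Epoly (map h c))
        [: - qint (k + 1) / qvar ^ (k + 1), 1 / qvar ^ (k + 1) :])) (qint 1) = (-1) ^ (k - 1)"
      using poly_qzeta_summand_qint_1[OF assms, of c "k - 1"] by simp
  qed
  then show ?thesis
    by (simp add: euler_char_def mult.commute)
qed

subsection \<open>Euler characteristic of cones\<close>

lemma alternating_sum_telescope:
  fixes f :: "nat \<Rightarrow> 'a::comm_ring_1"
  shows "(\<Sum>k\<in>{1..n}. (-1) ^ (k - 1) * (f k + f (k - 1))) = f 0 - (-1) ^ n * f n"
  by (induction n) (simp_all add: algebra_simps)

lemma sorted_wrt_less_split_at: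
  fixes c :: "'a::order list"
  assumes "sorted_wrt (<) c" and "\<forall>x\<in>set c. x \<le> m \<or> m \<le> x"
  shows "c = filter (\<lambda>x. x < m) c @ (if m \<in> set c then [m] else []) @ filter (\<lambda>x. m < x) c"
  using assms
proof (induction c)
  case Nil
  then show ?case by simp
next
  case (Cons x c)
  consider "x < m" | "x = m" | "m < x"
    using Cons.prems(2) by (auto simp: order.order_iff_strict)
  then show ?case
  proof cases
    case 1
    then show ?thesis using Cons by auto
  next
    case 2
    then have "\<forall>y\<in>set c. m < y" using Cons.prems(1) by simp
    then show ?thesis using 2 by (auto simp: filter_empty_conv dest: less_not_sym)
  next
    case 3
    then have "\<forall>y\<in>set c. m < y" using Cons.prems(1) by (auto dest: less_trans)
    then show ?thesis using 3 by (auto simp: filter_empty_conv dest: less_not_sym)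
  qed
qed

lemma sorted_wrt_less_imp_distinct: "sorted_wrt ((<) :: 'a::order \<Rightarrow> _) xs \<Longrightarrow> distinct xs"
  by (induction xs) auto

lemma removeAll_mem_chains:
  assumes "c \<in> chains P (Suc k)" and "m \<in> set c"
  shows "removeAll m c \<in> chains P k"
proof -
  have "distinct c"
    using assms(1) by (auto simp: chains_def intro: sorted_wrt_less_imp_distinct)
  then have "length (removeAll m c) = k"
    using assms by (simp add: distinct_remove1_removeAll[symmetric] length_remove1 chains_def)
  then show ?thesis
    using assms(1) by (auto simp: chains_def removeAll_filter_not_eq intro: sorted_wrt_filter)
qed

lemma insert_comparable_mem_chains:
  assumes "c \<in> chains P k" and "m \<in> P" and "m \<notin> set c"
    and comparable: "\<forall>x\<in>P. x \<le> m \<or> m \<le> x"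
  shows "filter (\<lambda>x. x < m) c @ m # filter (\<lambda>x. m < x) c \<in> chains P (Suc k)"
proof -
  have sorted: "sorted_wrt (<) c" and "set c \<subseteq> P" and "length c = k"
    using assms(1) by (auto simp: chains_def)
  then have "c = filter (\<lambda>x. x < m) c @ filter (\<lambda>x. m < x) c"
    using sorted_wrt_less_split_at[of c m] comparable assms(3) by auto
  then have "length (filter (\<lambda>x. x < m) c @ m # filter (\<lambda>x. m < x) c) = Suc k"
    using \<open>length c = k\<close> by (metis length_Cons length_append add_Suc_right)
  moreover have "sorted_wrt (<) (filter (\<lambda>x. x < m) c @ m # filter (\<lambda>x. m < x) c)"
    using sorted by (auto simp: sorted_wrt_append intro: sorted_wrt_filter less_trans)
  ultimately show ?thesis
    using \<open>set c \<subseteq> P\<close> assms(2) by (auto simp: chains_def)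
qed

lemma card_chains_through_eq_card_chains_avoiding:
  assumes "m \<in> P" and comparable: "\<forall>x\<in>P. x \<le> m \<or> m \<le> x"
  shows "card {c\<in>chains P (Suc k). m \<in> set c} = card {c\<in>chains P k. m \<notin> set c}"
proof -
  define insert_m where "insert_m c = filter (\<lambda>x. x < m) c @ m # filter (\<lambda>x. m < x) c"
    for c
  have split:
    "c = filter (\<lambda>x. x < m) c @ (if m \<in> set c then [m] else []) @ filter (\<lambda>x. m < x) c"
    if "c \<in> chains P n" for c n
  proof (rule sorted_wrt_less_split_at)
    show "sorted_wrt (<) c" and "\<forall>x\<in>set c. x \<le> m \<or> m \<le> x"
      using that comparable by (auto simp: chains_def)
  qed
  let ?through = "{c\<in>chains P (Suc k). m \<in> set c}"
  let ?avoiding = "{c\<in>chains P k. m \<notin> set c}"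
  have "bij_betw (removeAll m) ?through ?avoiding"
  proof (rule bij_betw_byWitness[where f' = insert_m])
    show "\<forall>c\<in>?through. insert_m (removeAll m c) = c"
    proof
      fix c assume "c \<in> ?through"
      then have "c = filter (\<lambda>x. x < m) c @ m # filter (\<lambda>x. m < x) c"
        using split[of c "Suc k"] by simp
      moreover have "filter (\<lambda>x. x < m) (removeAll m c) = filter (\<lambda>x. x < m) c"
        and "filter (\<lambda>x. m < x) (removeAll m c) = filter (\<lambda>x. m < x) c"
        by (auto simp: removeAll_filter_not_eq intro: filter_cong)
      ultimately show "insert_m (removeAll m c) = c"
        unfolding insert_m_def by simp
    qed
    show "\<forall>c\<in>?avoiding. removeAll m (insert_m c) = c"
    proof
      fix c assume c: "c \<in> ?avoiding"
      have "removeAll m (insert_m c) = filter (\<lambda>x. x < m) c @ filter (\<lambda>x. m < x) c"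
        by (simp add: insert_m_def)
      also have "\<dots> = c"
        using split[of c k] c by simp
      finally show "removeAll m (insert_m c) = c" .
    qed
    show "removeAll m ` ?through \<subseteq> ?avoiding"
      by (auto intro: removeAll_mem_chains)
    show "insert_m ` ?avoiding \<subseteq> ?through"
      using insert_comparable_mem_chains[OF _ assms(1) _ comparable] by (auto simp: insert_m_def)
  qed
  then show ?thesis
    by (rule bij_betw_same_card)
qed

lemma finite_chains: "finite P \<Longrightarrow> finite (chains P k)"
  unfolding chains_def by (rule finite_subset[OF _ finite_lists_length_eq[of P k]]) auto

lemma set_eq_if_mem_chains_card:
  assumes "finite P" and "c \<in> chains P (card P)"
  shows "set c = P"
proof -
  have "distinct c" and "set c \<subseteq> P" and "length c = card P"
    using assms(2) by (auto simp: chains_def intro: sorted_wrt_less_imp_distinct)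
  then show ?thesis
    using assms(1) by (simp add: card_subset_eq distinct_card)
qed

lemma euler_char_cone:
  assumes "finite P" and "m \<in> P" and "\<forall>x\<in>P. x \<le> m \<or> m \<le> x"
  shows "euler_char P = 1"
proof -
  define avoiding where "avoiding k = int (card {c\<in>chains P k. m \<notin> set c})" for k
  have card_chains: "int (card (chains P k)) = avoiding k + avoiding (k - 1)" if "1 \<le> k" for k
  proof -
    obtain j where k: "k = Suc j"
      using \<open>1 \<le> k\<close> by (cases k) auto
    have "card (chains P k)
        = card {c\<in>chains P k. m \<notin> set c} + card {c\<in>chains P k. m \<in> set c}"
      using card_Int_Diff[OF finite_chains[OF assms(1)], of k "{c. m \<notin> set c}"]
      by (simp add: Int_def set_diff_eq)
    then show ?thesis
      using card_chains_through_eq_card_chains_avoiding[OF assms(2,3), of j] k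
      by (simp add: avoiding_def)
  qed
  have "{c\<in>chains P 0. m \<notin> set c} = {[]}"
    by (auto simp: chains_def)
  then have empty_chain: "avoiding 0 = 1"
    by (simp add: avoiding_def)
  have "{c\<in>chains P (card P). m \<notin> set c} = {}"
    using set_eq_if_mem_chains_card[OF assms(1)] assms(2) by blast
  then have no_maximal_chain: "avoiding (card P) = 0"
    unfolding avoiding_def by (metis card.empty of_nat_0)
  have "euler_char P = (\<Sum>k\<in>{1..card P}. (-1) ^ (k - 1) * (avoiding k + avoiding (k - 1)))"
    unfolding euler_char_def by (rule sum.cong) (simp_all add: card_chains)
  also have "\<dots> = avoiding 0 - (-1) ^ card P * avoiding (card P)"
    by (rule alternating_sum_telescope)
  finally show ?thesis
    by (simp add: empty_chain no_maximal_chain)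
qed

theorem mainTheorem12:
  fixes P :: "'a::order set" and h :: "'a \<Rightarrow> nat"
  assumes "finite P" and "height_fn P h"
  shows "poly (qzeta P h) (qint 1) = of_int (euler_char P)
    \<and> (((\<exists>m\<in>P. \<forall>x\<in>P. m \<le> x) \<or> (\<exists>M\<in>P. \<forall>x\<in>P. x \<le> M))
         \<longrightarrow> poly (qzeta P h) (qint 1) = 1)"
proof -
  have "euler_char P = 1" if "(\<exists>m\<in>P. \<forall>x\<in>P. m \<le> x) \<or> (\<exists>M\<in>P. \<forall>x\<in>P. x \<le> M)"
  proof -
    from that obtain m where "m \<in> P" and "\<forall>x\<in>P. x \<le> m \<or> m \<le> x"
      by blast
    then show ?thesis
      by (rule euler_char_cone[OF assms(1)])
  qed
  then show ?thesis
    using poly_qzeta_qint_1[OF assms] by simp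
qed

end
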